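(* Let $W$ be a subset of a metric space $(X,d)$ with $\operatorname{den}(W)=\mathfrak c=2^{\aleph_0}$. Then there exists $\varepsilon_0>0$ such that for all $\varepsilon\in\,]0,\varepsilon_0[$, $$\hat{\mathcal N}^X_\varepsilon(W)=\hat{\mathcal N}_\varepsilon(W)=\hat{\mathcal M}_\varepsilon(W)=\mathcal M^*_\varepsilon(W)=\mathfrak c.$$
   Context: $\operatorname{den}(W)$ is the minimal cardinality of a dense subset of $W$. Closed balls: $B(c,r)=\{x:d(x,c)\le r\}$; $C$ is an $\varepsilon$-net for $W$ if $W\subseteq\bigcup_{c\in C}B(c,\varepsilon)$; $A$ is $\varepsilon$-distinguishable if $d(x,y)>\varepsilon$ for distinct $x,y\in A$. $\hat{\mathcal N}^A_\varepsilon(W)$ is the minimal cardinality of an $\varepsilon$-net $C\subseteq A$ for $W$; $\hat{\mathcal N}_\varepsilon(W):=\hat{\mathcal N}^W_\varepsilon(W)$; $\hat{\mathcal M}_\varepsilon(W)$ is the smallest cardinality of an $\varepsilon$-distinguishable $A\subseteq W$ that is maximal under inclusion among $\varepsilon$-distinguishable subsets of $W$; $\mathcal M^*_\varepsilon(W)$ is the smallest cardinal $\ge\operatorname{card}(A)$ for every $\varepsilon$-distinguishable $A\subseteq W$. *)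

theory Defs
  imports "HOL-Analysis.Analysis" "HOL-Library.Equipollence"
begin

text \<open>The ambient metric space (X,d) is the type 'a of class metric_space (X = UNIV, d = dist).
  Closed balls are cball c r = {x. dist c x \<le> r}.\<close>

definition dense_in :: "'a::metric_space set \<Rightarrow> 'a set \<Rightarrow> bool" where
  "dense_in W D \<longleftrightarrow> D \<subseteq> W \<and> W \<subseteq> closure D"

definition eps_net :: "real \<Rightarrow> 'a::metric_space set \<Rightarrow> 'a set \<Rightarrow> bool" where
  "eps_net \<epsilon> W C \<longleftrightarrow> W \<subseteq> (\<Union>c\<in>C. cball c \<epsilon>)"

definition eps_distinguishable :: "real \<Rightarrow> 'a::metric_space set \<Rightarrow> bool" where
  "eps_distinguishable \<epsilon> A \<longleftrightarrow> (\<forall>x\<in>A. \<forall>y\<in>A. x \<noteq> y \<longrightarrow> dist x y > \<epsilon>)"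

definition maximal_eps_distinguishable :: "real \<Rightarrow> 'a::metric_space set \<Rightarrow> 'a set \<Rightarrow> bool" where
  "maximal_eps_distinguishable \<epsilon> W A \<longleftrightarrow> A \<subseteq> W \<and> eps_distinguishable \<epsilon> A \<and>
     (\<forall>B. A \<subseteq> B \<and> B \<subseteq> W \<and> eps_distinguishable \<epsilon> B \<longrightarrow> B = A)"

definition min_card_is_continuum :: "('a set \<Rightarrow> bool) \<Rightarrow> bool" where
  "min_card_is_continuum P \<longleftrightarrow>
     (\<exists>S. P S \<and> S \<approx> (UNIV::real set)) \<and> (\<forall>S. P S \<longrightarrow> (UNIV::real set) \<lesssim> S)"

text \<open>"The smallest cardinal \<ge> card S for every S satisfying P equals the continuum":
  c is an upper bound, and no cardinal below c (represented by a subset K of the reals with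
  K strictly smaller than the reals) is an upper bound.\<close>
definition sup_card_is_continuum :: "('a set \<Rightarrow> bool) \<Rightarrow> bool" where
  "sup_card_is_continuum P \<longleftrightarrow>
     (\<forall>S. P S \<longrightarrow> S \<lesssim> (UNIV::real set)) \<and>
     (\<forall>K::real set. K \<prec> (UNIV::real set) \<longrightarrow> (\<exists>S. P S \<and> \<not> S \<lesssim> K))"

end

theory Submission
  imports Defs
begin

text \<open>
  Packings and nets control each other: an \<open>\<epsilon>\<close>-distinguishable subset of \<open>W\<close>
  injects into any dense subset of \<open>W\<close> (send each point to a dense point within \<open>\<epsilon>/2\<close>),
  and a \<open>\<delta>\<close>-distinguishable subset of \<open>W\<close> injects into any \<open>\<epsilon>\<close>-net of \<open>W\<close> when \<open>2\<epsilon> \<le> \<delta>\<close>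
  (send each point to a centre within \<open>\<epsilon>\<close>).  By Zorn's lemma maximal \<open>\<epsilon>\<close>-distinguishable
  subsets exist, and they are \<open>\<epsilon>\<close>-nets lying in \<open>W\<close>.

  The union of maximal \<open>1/(n+1)\<close>-distinguishable subsets of \<open>W\<close> is dense in \<open>W\<close>, so it has
  cardinality at least \<open>\<frak>c\<close>.  Since \<open>\<frak>c\<close> is not a countable union of smaller sets
  (a Koenig-type diagonal argument), one of these packings \<open>A\<close>, say for \<open>\<delta> = 1/(n+1)\<close>,
  already has cardinality \<open>\<frak>c\<close>.  With \<open>\<epsilon>\<^sub>0 = \<delta>/2\<close> and \<open>0 < \<epsilon> < \<epsilon>\<^sub>0\<close>, every \<open>\<epsilon>\<close>-net
  receives \<open>A\<close> injectively, every \<open>\<epsilon>\<close>-distinguishable subset of \<open>W\<close> injects into a dense set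
  of size \<open>\<frak>c\<close>, and a maximal \<open>\<epsilon>\<close>-distinguishable set is both; all four quantities are \<open>\<frak>c\<close>.
\<close>

text \<open>Zorn's lemma: the union of a chain of \<open>\<epsilon>\<close>-distinguishable sets is \<open>\<epsilon>\<close>-distinguishable.\<close>

lemma maximal_eps_distinguishable_exists:
  fixes W :: "'a::metric_space set"
  shows "\<exists>M. maximal_eps_distinguishable \<epsilon> W M"
proof -
  let ?Packings = "{B. B \<subseteq> W \<and> eps_distinguishable \<epsilon> B}"
  have chains_closed: "\<Union>C \<in> ?Packings" if C: "C \<in> chains ?Packings" for C
  proof -
    have "eps_distinguishable \<epsilon> (\<Union>C)"
      unfolding eps_distinguishable_def
    proof (intro ballI impI)
      fix x y assume "x \<in> \<Union>C" "y \<in> \<Union>C" "x \<noteq> y"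
      then obtain X Y where XY: "X \<in> C" "Y \<in> C" "x \<in> X" "y \<in> Y" by auto
      with C have "X \<subseteq> Y \<or> Y \<subseteq> X" by (auto simp: chains_def chain_subset_def)
      then obtain Z where "Z \<in> C" "x \<in> Z" "y \<in> Z" using XY by blast
      with C \<open>x \<noteq> y\<close> show "dist x y > \<epsilon>" by (auto simp: chains_def eps_distinguishable_def)
    qed
    moreover have "\<Union>C \<subseteq> W" using C by (auto simp: chains_def)
    ultimately show ?thesis by simp
  qed
  then obtain M where "M \<in> ?Packings" "\<forall>X\<in>?Packings. M \<subseteq> X \<longrightarrow> X = M"
    using Zorn_Lemma[of ?Packings] chains_closed by blast
  then show ?thesis unfolding maximal_eps_distinguishable_def by auto
qed

text \<open>A maximal \<open>\<epsilon>\<close>-distinguishable subset of \<open>W\<close> is an \<open>\<epsilon>\<close>-net for \<open>W\<close>: a point of \<open>W\<close>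
  farther than \<open>\<epsilon>\<close> from all of \<open>M\<close> could be added to \<open>M\<close>.\<close>

lemma maximal_eps_distinguishable_imp_net:
  fixes W :: "'a::metric_space set"
  assumes M: "maximal_eps_distinguishable \<epsilon> W M" and "\<epsilon> > 0"
  shows "eps_net \<epsilon> W M"
  unfolding eps_net_def
proof
  fix w assume w: "w \<in> W"
  show "w \<in> (\<Union>c\<in>M. cball c \<epsilon>)"
  proof (rule ccontr)
    assume "w \<notin> (\<Union>c\<in>M. cball c \<epsilon>)"
    then have far: "\<forall>m\<in>M. dist m w > \<epsilon>" and "w \<notin> M"
      using \<open>\<epsilon> > 0\<close> by (auto simp: not_le)
    have "eps_distinguishable \<epsilon> (insert w M)" "insert w M \<subseteq> W"
      using M far w unfolding maximal_eps_distinguishable_def eps_distinguishable_def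
      by (auto simp: dist_commute)
    then have "insert w M = M" using M unfolding maximal_eps_distinguishable_def by blast
    with \<open>w \<notin> M\<close> show False by auto
  qed
qed

text \<open>Two points of an \<open>\<epsilon>\<close>-distinguishable set whose distances to a common point \<open>c\<close> sum to
  at most \<open>\<epsilon>\<close> coincide; this makes the nearest-point maps below injective.\<close>

lemma eps_distinguishable_common_neighbour:
  assumes "eps_distinguishable \<epsilon> A" "a \<in> A" "b \<in> A" "dist c a + dist c b \<le> \<epsilon>"
  shows "a = b"
proof (rule ccontr)
  assume "a \<noteq> b"
  have "dist a b \<le> dist c a + dist c b" by (metis dist_commute dist_triangle)
  with assms \<open>a \<noteq> b\<close> show False unfolding eps_distinguishable_def by fastforce
qed

lemma eps_distinguishable_lepoll_dense:
  fixes W :: "'a::metric_space set"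
  assumes "dense_in W D" "\<epsilon> > 0" "A \<subseteq> W" "eps_distinguishable \<epsilon> A"
  shows "A \<lesssim> D"
proof -
  have "\<forall>a\<in>A. \<exists>d\<in>D. dist d a < \<epsilon>/2"
    using assms(1-3) unfolding dense_in_def by (meson closure_approachable half_gt_zero subsetD)
  then obtain f where f: "\<forall>a\<in>A. f a \<in> D \<and> dist (f a) a < \<epsilon>/2" by metis
  have "inj_on f A"
  proof (rule inj_onI)
    fix a b assume ab: "a \<in> A" "b \<in> A" "f a = f b"
    have "dist (f a) a < \<epsilon>/2" "dist (f a) b < \<epsilon>/2" using f ab by auto
    then have "dist (f a) a + dist (f a) b \<le> \<epsilon>" by linarith
    then show "a = b" by (rule eps_distinguishable_common_neighbour[OF assms(4) ab(1,2)])
  qed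
  with f show ?thesis unfolding lepoll_def by blast
qed

lemma eps_distinguishable_lepoll_net:
  fixes W :: "'a::metric_space set"
  assumes "eps_net \<epsilon> W C" "A \<subseteq> W" "eps_distinguishable \<delta> A" "2 * \<epsilon> \<le> \<delta>"
  shows "A \<lesssim> C"
proof -
  have "\<forall>a\<in>A. \<exists>c\<in>C. dist c a \<le> \<epsilon>"
    using assms(1,2) unfolding eps_net_def by (fastforce simp: mem_cball)
  then obtain f where f: "\<forall>a\<in>A. f a \<in> C \<and> dist (f a) a \<le> \<epsilon>" by metis
  have "inj_on f A"
  proof (rule inj_onI)
    fix a b assume ab: "a \<in> A" "b \<in> A" "f a = f b"
    have "dist (f a) a \<le> \<epsilon>" "dist (f a) b \<le> \<epsilon>" using f ab by auto
    then have "dist (f a) a + dist (f a) b \<le> \<delta>" using assms(4) by linarith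
    then show "a = b" by (rule eps_distinguishable_common_neighbour[OF assms(3) ab(1,2)])
  qed
  with f show ?thesis unfolding lepoll_def by blast
qed

section \<open>The continuum is not a countable union of smaller sets\<close>

text \<open>Koenig's diagonal argument for \<open>\<P>(\<nat>)\<close>: if \<open>\<P>(\<nat>)\<close> injects into \<open>\<Union>\<^sub>n A\<^sub>n\<close>, then it
  injects into some \<open>A\<^sub>n\<close>.  Identify \<open>\<P>(\<nat>)\<close> with sequences of subsets of \<open>\<nat>\<close> via pairing; if no
  \<open>A\<^sub>n\<close> maps onto \<open>\<P>(\<nat>)\<close> in coordinate \<open>n\<close>, pick a missed value in every coordinate.\<close>

lemma nat_sets_lepoll_countable_Union:
  fixes A :: "nat \<Rightarrow> 'a set"
  assumes "(UNIV::nat set set) \<lesssim> (\<Union>n. A n)"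
  shows "\<exists>n. (UNIV::nat set set) \<lesssim> A n"
proof (rule ccontr)
  assume small: "\<nexists>n. (UNIV::nat set set) \<lesssim> A n"
  obtain g where g: "(UNIV::nat set set) \<subseteq> g ` (\<Union>n. A n)"
    using assms by (auto simp: lepoll_iff)
  define coord :: "nat set \<Rightarrow> nat \<Rightarrow> nat set"
    where "coord S n = {m. prod_encode (n, m) \<in> S}" for S n
  have coord_surj: "coord {prod_encode (n, m) | n m. m \<in> F n} = F" for F
    unfolding coord_def by (auto simp: fun_eq_iff prod_encode_eq)
  have "\<forall>n. \<exists>s. s \<notin> (\<lambda>u. coord (g u) n) ` A n"
  proof (rule allI, rule ccontr)
    fix n
    assume "\<nexists>s. s \<notin> (\<lambda>u. coord (g u) n) ` A n"
    then have "(UNIV::nat set set) = (\<lambda>u. coord (g u) n) ` A n" by blast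
    then have "(UNIV::nat set set) \<lesssim> A n" by (metis image_lepoll)
    with small show False by blast
  qed
  from choice[OF this] obtain F where F: "\<forall>n. F n \<notin> (\<lambda>u. coord (g u) n) ` A n" ..
  have "{prod_encode (n, m) | n m. m \<in> F n} \<in> g ` (\<Union>n. A n)" using g by (rule subsetD) simp
  then obtain u where u: "{prod_encode (n, m) | n m. m \<in> F n} = g u" and "u \<in> (\<Union>n. A n)"
    by (rule imageE)
  then obtain n where "u \<in> A n" by blast
  then have "coord (g u) n \<in> (\<lambda>u. coord (g u) n) ` A n" by (rule imageI)
  with F show False unfolding u[symmetric] coord_surj by blast
qed

lemma continuum_not_lepoll_countable_Union:
  fixes A :: "nat \<Rightarrow> 'a set"
  assumes "\<And>n. A n \<prec> (UNIV::real set)"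
  shows "\<not> (UNIV::real set) \<lesssim> (\<Union>n. A n)"
proof
  assume "(UNIV::real set) \<lesssim> (\<Union>n. A n)"
  then have "(UNIV::nat set set) \<lesssim> (\<Union>n. A n)"
    using nat_sets_eqpoll_reals lepoll_trans1 by blast
  then obtain n where "(UNIV::nat set set) \<lesssim> A n"
    using nat_sets_lepoll_countable_Union by blast
  then have "(UNIV::real set) \<lesssim> A n"
    using nat_sets_eqpoll_reals eqpoll_sym lepoll_trans1 by blast
  with assms[of n] show False using lesspoll_trans2 by blast
qed

lemma dense_in_Union_nets:
  fixes W :: "'a::metric_space set"
  assumes "\<And>n. N n \<subseteq> W" "\<And>n. eps_net (1 / Suc n) W (N n)"
  shows "dense_in W (\<Union>n. N n)"
  unfolding dense_in_def
proof
  show "(\<Union>n. N n) \<subseteq> W" using assms(1) by blast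
  show "W \<subseteq> closure (\<Union>n. N n)"
  proof
    fix w assume w: "w \<in> W"
    show "w \<in> closure (\<Union>n. N n)"
      unfolding closure_approachable
    proof (intro allI impI)
      fix e :: real assume "e > 0"
      then obtain n where n: "1 / real (Suc n) < e" using nat_approx_posE by blast
      obtain m where "m \<in> N n" "dist m w \<le> 1 / Suc n"
        using w assms(2)[of n] unfolding eps_net_def by auto
      with n show "\<exists>y\<in>\<Union>n. N n. dist y w < e" by force
    qed
  qed
qed

lemma continuum_packing_exists:
  fixes W :: "'a::metric_space set"
  assumes "min_card_is_continuum (dense_in W)"
  shows "\<exists>\<delta>>0. \<exists>A. A \<subseteq> W \<and> eps_distinguishable \<delta> A \<and> (UNIV::real set) \<lesssim> A"
proof -
  from assms obtain D where D: "dense_in W D" "D \<approx> (UNIV::real set)"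
    and dense_large: "\<And>S. dense_in W S \<Longrightarrow> (UNIV::real set) \<lesssim> S"
    unfolding min_card_is_continuum_def by blast
  have "\<forall>n. \<exists>M. maximal_eps_distinguishable (1 / Suc n) W M"
    using maximal_eps_distinguishable_exists by blast
  then obtain P where P: "\<And>n. maximal_eps_distinguishable (1 / Suc n) W (P n)"
    by metis
  then have P_sub: "\<And>n. P n \<subseteq> W" and P_dist: "\<And>n. eps_distinguishable (1 / Suc n) (P n)"
    unfolding maximal_eps_distinguishable_def by auto
  have "dense_in W (\<Union>n. P n)"
    using P P_sub by (intro dense_in_Union_nets maximal_eps_distinguishable_imp_net) auto
  then have "(UNIV::real set) \<lesssim> (\<Union>n. P n)" by (rule dense_large)
  then obtain n where not_small: "\<not> P n \<prec> (UNIV::real set)"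
    using continuum_not_lepoll_countable_Union[of P] by metis
  have "P n \<lesssim> D"
    using eps_distinguishable_lepoll_dense[OF D(1) _ P_sub P_dist] by simp
  then have "P n \<lesssim> (UNIV::real set)" using D(2) by (rule lepoll_trans2)
  with not_small have "P n \<approx> (UNIV::real set)" by (simp add: lepoll_iff_leqpoll)
  then have "(UNIV::real set) \<lesssim> P n" by (simp add: eqpoll_imp_lepoll eqpoll_sym)
  with P_sub P_dist show ?thesis by (intro exI[of _ "1 / Suc n"]) auto
qed

lemma min_card_is_continuumI:
  assumes "P S\<^sub>0" "S\<^sub>0 \<approx> (UNIV::real set)" "\<And>S. P S \<Longrightarrow> (UNIV::real set) \<lesssim> S"
  shows "min_card_is_continuum P"
  unfolding min_card_is_continuum_def using assms by blast

lemma sup_card_is_continuumI: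
  assumes "\<And>S. P S \<Longrightarrow> S \<lesssim> (UNIV::real set)" "P S\<^sub>0" "(UNIV::real set) \<lesssim> S\<^sub>0"
  shows "sup_card_is_continuum P"
  unfolding sup_card_is_continuum_def
proof (intro conjI allI impI)
  fix S assume "P S"
  then show "S \<lesssim> (UNIV::real set)" by (rule assms(1))
next
  fix K :: "real set" assume K: "K \<prec> (UNIV::real set)"
  have "\<not> S\<^sub>0 \<lesssim> K"
  proof
    assume "S\<^sub>0 \<lesssim> K"
    with assms(3) have "(UNIV::real set) \<lesssim> K" by (rule lepoll_trans)
    from lesspoll_trans2[OF K this] show False by simp
  qed
  with assms(2) show "\<exists>S. P S \<and> \<not> S \<lesssim> K" by blast
qed

theorem corollary2p11:
  fixes W :: "'a::metric_space set"
  assumes "min_card_is_continuum (dense_in W)"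
  shows "\<exists>\<epsilon>0>0. \<forall>\<epsilon>. 0 < \<epsilon> \<and> \<epsilon> < \<epsilon>0 \<longrightarrow>
           min_card_is_continuum (\<lambda>C. C \<subseteq> (UNIV::'a set) \<and> eps_net \<epsilon> W C) \<and>
           min_card_is_continuum (\<lambda>C. C \<subseteq> W \<and> eps_net \<epsilon> W C) \<and>
           min_card_is_continuum (maximal_eps_distinguishable \<epsilon> W) \<and>
           sup_card_is_continuum (\<lambda>A. A \<subseteq> W \<and> eps_distinguishable \<epsilon> A)"
proof -
  obtain D where D: "dense_in W D" "D \<approx> (UNIV::real set)"
    using assms unfolding min_card_is_continuum_def by blast
  obtain \<delta> A where "\<delta> > 0" and A: "A \<subseteq> W" "eps_distinguishable \<delta> A" "(UNIV::real set) \<lesssim> A"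
    using continuum_packing_exists[OF assms] by blast
  show ?thesis
  proof (intro exI[of _ "\<delta> / 2"] conjI allI impI)
    fix \<epsilon> :: real assume \<epsilon>: "0 < \<epsilon> \<and> \<epsilon> < \<delta> / 2"
    have nets_large: "(UNIV::real set) \<lesssim> C" if "eps_net \<epsilon> W C" for C
    proof -
      have "A \<lesssim> C" using eps_distinguishable_lepoll_net[OF that A(1,2)] \<epsilon> by simp
      with A(3) show ?thesis by (rule lepoll_trans)
    qed
    have packings_small: "B \<lesssim> (UNIV::real set)" if "B \<subseteq> W" "eps_distinguishable \<epsilon> B" for B
    proof -
      have "B \<lesssim> D" using eps_distinguishable_lepoll_dense[OF D(1) _ that] \<epsilon> by simp
      with D(2) show ?thesis by (simp add: lepoll_trans2)
    qed
    obtain M where M: "maximal_eps_distinguishable \<epsilon> W M"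
      using maximal_eps_distinguishable_exists by blast
    have M_net: "eps_net \<epsilon> W M" using maximal_eps_distinguishable_imp_net M \<epsilon> by blast
    have M_sub: "M \<subseteq> W" and M_dist: "eps_distinguishable \<epsilon> M"
      using M unfolding maximal_eps_distinguishable_def by auto
    have M_size: "M \<approx> (UNIV::real set)"
      by (rule lepoll_antisym[OF packings_small[OF M_sub M_dist] nets_large[OF M_net]])
    show "min_card_is_continuum (\<lambda>C. C \<subseteq> (UNIV::'a set) \<and> eps_net \<epsilon> W C)"
      by (rule min_card_is_continuumI[of _ M]) (use M_net M_size nets_large in auto)
    show "min_card_is_continuum (\<lambda>C. C \<subseteq> W \<and> eps_net \<epsilon> W C)"
      by (rule min_card_is_continuumI[of _ M]) (use M_sub M_net M_size nets_large in auto)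
    show "min_card_is_continuum (maximal_eps_distinguishable \<epsilon> W)"
      by (rule min_card_is_continuumI[of _ M])
        (use M M_size nets_large maximal_eps_distinguishable_imp_net \<epsilon> in auto)
    show "sup_card_is_continuum (\<lambda>A. A \<subseteq> W \<and> eps_distinguishable \<epsilon> A)"
      by (rule sup_card_is_continuumI[of _ M]) (use M_sub M_dist nets_large[OF M_net] packings_small in auto)
  qed (use \<open>\<delta> > 0\<close> in simp)
qed

end
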